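(* Let $T$ be a tree in which every element has at most countably many immediate successors. Then $T$ with the fine wedge topology is suborderable, i.e. homeomorphic to a subspace of a linearly ordered topological space.
   Context: A tree is a partially ordered set in which the set of predecessors of each element is well-ordered. $y$ is an immediate successor of $x$ if $x<y$ and there is no $z$ with $x<z<y$. For $t\in T$, $V_t=\{s\in T:s\ge t\}$. The fine wedge topology on $T$ has as subbase all sets $V_t$ and their complements $T\setminus V_t$. *)

theory Defs
  imports "HOL-Analysis.Analysis"
begin

definition predecessors :: "'a::order set \<Rightarrow> 'a \<Rightarrow> 'a set" where
  "predecessors T t = {s \<in> T. s < t}"

definition is_tree :: "'a::order set \<Rightarrow> bool" where
  "is_tree T \<longleftrightarrow> (\<forall>t\<in>T.
      (\<forall>x\<in>predecessors T t. \<forall>y\<in>predecessors T t. x \<le> y \<or> y \<le> x) \<and>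
      wf {(x, y). x \<in> predecessors T t \<and> y \<in> predecessors T t \<and> x < y})"

definition immediate_successors :: "'a::order set \<Rightarrow> 'a \<Rightarrow> 'a set" where
  "immediate_successors T x = {y \<in> T. x < y \<and> \<not> (\<exists>z\<in>T. x < z \<and> z < y)}"

definition wedge :: "'a::order set \<Rightarrow> 'a \<Rightarrow> 'a set" where
  "wedge T t = {s \<in> T. s \<ge> t}"

definition fine_wedge_topology :: "'a::order set \<Rightarrow> 'a topology" where
  "fine_wedge_topology T =
     topology_generated_by ((wedge T ` T) \<union> ((\<lambda>t. T - wedge T t) ` T))"

text \<open>The order topology on a linearly ordered set L (with linear order r,
  reflexive as in the library notion linear_order_on): subbase consists of L
  and the open rays.\<close>
definition order_topology_on :: "'b set \<Rightarrow> 'b rel \<Rightarrow> 'b topology" where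
  "order_topology_on L r = topology_generated_by
     ({L} \<union> {{x \<in> L. (a, x) \<in> r \<and> x \<noteq> a} | a. a \<in> L}
          \<union> {{x \<in> L. (x, a) \<in> r \<and> x \<noteq> a} | a. a \<in> L})"

definition suborderable_in :: "'b itself \<Rightarrow> 'a topology \<Rightarrow> bool" where
  "suborderable_in _ X \<longleftrightarrow> (\<exists>(L::'b set) r Y. linear_order_on L r \<and> Y \<subseteq> L \<and>
      X homeomorphic_space subtopology (order_topology_on L r) Y)"

end

theory Submission
  imports Defs
begin

text \<open>Fix a strict linear order on every set of siblings (nodes with the same predecessors)
  and order T lexicographically: x precedes y if x < y, or if the branches to x and y fork at
  siblings a \<le> x and b \<le> y with a before b. Every wedge is then convex, and every final
  segment {x. a \<prec> x} is upward closed, hence a union of wedges. An initial segment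
  {x. x \<prec> a} is open as well, provided each immediate successor of a node is preceded by
  all but finitely many of its siblings: for x < a, removing from the wedge at x the wedges at
  the finitely many immediate successors of x that do not precede the one below a leaves a
  neighbourhood of x inside the segment. Countability yields such sibling orders: order the
  immediate successors of a node by decreasing index in an enumeration by the naturals.
  Finally, embed T as T \<times> {0} into the lexicographically ordered T \<times> {-1, 0, 1}, keeping
  (t, 1) only when t has finitely many immediate successors, i.e. when {t} is open; the points
  (t, -1) and (t, 1) turn the rays {x. t \<preceq> x} and {x. x \<preceq> t} into traces of open rays.\<close>

section \<open>The fine wedge and order topologies\<close>

lemma topspace_fine_wedge_topology [simp]: "topspace (fine_wedge_topology T) = T"
  by (auto simp: fine_wedge_topology_def wedge_def)

lemma openin_wedge: "t \<in> T \<Longrightarrow> openin (fine_wedge_topology T) (wedge T t)"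
  unfolding fine_wedge_topology_def by (rule topology_generated_by_Basis) auto

lemma openin_co_wedge: "t \<in> T \<Longrightarrow> openin (fine_wedge_topology T) (T - wedge T t)"
  unfolding fine_wedge_topology_def by (rule topology_generated_by_Basis) auto

lemma openin_fine_wedge_topology_upclosed:
  assumes "U \<subseteq> T" and "\<And>x y. x \<in> U \<Longrightarrow> y \<in> T \<Longrightarrow> x \<le> y \<Longrightarrow> y \<in> U"
  shows "openin (fine_wedge_topology T) U"
proof -
  have "U = \<Union> (wedge T ` U)"
    using assms by (auto simp: wedge_def)
  moreover have "openin (fine_wedge_topology T) (\<Union> (wedge T ` U))"
    using assms(1) openin_wedge by (intro openin_Union) blast
  ultimately show ?thesis by simp
qed

lemma openin_wedge_diff_wedges:
  assumes "x \<in> T" "finite F" "F \<subseteq> T"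
  shows "openin (fine_wedge_topology T) (wedge T x - \<Union> (wedge T ` F))"
proof -
  have "wedge T x - \<Union> (wedge T ` F) = wedge T x \<inter> ((\<Inter>d\<in>F. T - wedge T d) \<inter> T)"
    by (auto simp: wedge_def)
  moreover have "openin (fine_wedge_topology T)
      ((\<Inter>d\<in>F. T - wedge T d) \<inter> topspace (fine_wedge_topology T))"
    using assms(2,3) by (intro openin_INT openin_co_wedge) auto
  ultimately show ?thesis
    using openin_wedge[OF assms(1)] by (metis openin_Int topspace_fine_wedge_topology)
qed

lemma continuous_map_into_fine_wedge_topology:
  assumes "g ` topspace X \<subseteq> T"
    and "\<And>t. t \<in> T \<Longrightarrow> openin X {x \<in> topspace X. g x \<in> wedge T t}"
    and "\<And>t. t \<in> T \<Longrightarrow> openin X {x \<in> topspace X. g x \<notin> wedge T t}"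
  shows "continuous_map X (fine_wedge_topology T) g"
  unfolding fine_wedge_topology_def
proof (rule continuous_on_generated_topo)
  fix U assume "U \<in> wedge T ` T \<union> (\<lambda>t. T - wedge T t) ` T"
  then show "openin X (g -` U \<inter> topspace X)"
  proof
    assume "U \<in> wedge T ` T"
    then obtain t where "t \<in> T" "U = wedge T t" by blast
    then show ?thesis using assms(2)[of t] by (simp add: Collect_conj_eq Int_commute vimage_def)
  next
    assume "U \<in> (\<lambda>t. T - wedge T t) ` T"
    then obtain t where "t \<in> T" "U = T - wedge T t" by blast
    moreover have "g -` (T - wedge T t) \<inter> topspace X = {x \<in> topspace X. g x \<notin> wedge T t}"
      using assms(1) by auto
    ultimately show ?thesis using assms(3) by simp
  qed
qed (use assms(1) in \<open>auto simp: wedge_def\<close>)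

lemma topspace_order_topology_on [simp]: "topspace (order_topology_on L r) = L"
  by (auto simp: order_topology_on_def)

lemma openin_order_topology_on_greater:
  "a \<in> L \<Longrightarrow> openin (order_topology_on L r) {x \<in> L. (a, x) \<in> r \<and> x \<noteq> a}"
  unfolding order_topology_on_def by (rule topology_generated_by_Basis) blast

lemma openin_order_topology_on_less:
  "a \<in> L \<Longrightarrow> openin (order_topology_on L r) {x \<in> L. (x, a) \<in> r \<and> x \<noteq> a}"
  unfolding order_topology_on_def by (rule topology_generated_by_Basis) blast

lemma continuous_map_into_order_topology_on:
  assumes "f ` topspace X \<subseteq> L"
    and "\<And>a. a \<in> L \<Longrightarrow> openin X {x \<in> topspace X. (a, f x) \<in> r \<and> f x \<noteq> a}"
    and "\<And>a. a \<in> L \<Longrightarrow> openin X {x \<in> topspace X. (f x, a) \<in> r \<and> f x \<noteq> a}"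
  shows "continuous_map X (order_topology_on L r) f"
  unfolding order_topology_on_def
proof (rule continuous_on_generated_topo)
  fix U assume "U \<in> {L} \<union> {{x \<in> L. (a, x) \<in> r \<and> x \<noteq> a} | a. a \<in> L}
                        \<union> {{x \<in> L. (x, a) \<in> r \<and> x \<noteq> a} | a. a \<in> L}"
  then consider "U = L"
    | a where "a \<in> L" "U = {x \<in> L. (a, x) \<in> r \<and> x \<noteq> a}"
    | a where "a \<in> L" "U = {x \<in> L. (x, a) \<in> r \<and> x \<noteq> a}"
    by blast
  then show "openin X (f -` U \<inter> topspace X)"
  proof cases
    case 1
    then have "f -` U \<inter> topspace X = topspace X"
      using assms(1) by auto
    then show ?thesis by simp
  next
    case 2
    then have "f -` U \<inter> topspace X = {x \<in> topspace X. (a, f x) \<in> r \<and> f x \<noteq> a}"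
      using assms(1) by auto
    then show ?thesis using assms(2)[OF 2(1)] by simp
  next
    case 3
    then have "f -` U \<inter> topspace X = {x \<in> topspace X. (f x, a) \<in> r \<and> f x \<noteq> a}"
      using assms(1) by auto
    then show ?thesis using assms(3)[OF 3(1)] by simp
  qed
qed (use assms(1) in auto)

lemma linear_order_on_reflcl_strict:
  assumes "\<And>x. x \<in> A \<Longrightarrow> \<not> lt x x"
    and "\<And>x y z. x \<in> A \<Longrightarrow> y \<in> A \<Longrightarrow> z \<in> A \<Longrightarrow> lt x y \<Longrightarrow> lt y z \<Longrightarrow> lt x z"
    and "\<And>x y. x \<in> A \<Longrightarrow> y \<in> A \<Longrightarrow> x \<noteq> y \<Longrightarrow> lt x y \<or> lt y x"
  shows "linear_order_on A {(x, y). x \<in> A \<and> y \<in> A \<and> (lt x y \<or> x = y)}"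
  unfolding linear_order_on_def partial_order_on_def preorder_on_def
proof (intro conjI)
  show "trans {(x, y). x \<in> A \<and> y \<in> A \<and> (lt x y \<or> x = y)}"
    using assms(2) by (auto simp: trans_def)
  show "antisym {(x, y). x \<in> A \<and> y \<in> A \<and> (lt x y \<or> x = y)}"
    using assms(1,2) by (auto simp: antisym_def)
  show "total_on A {(x, y). x \<in> A \<and> y \<in> A \<and> (lt x y \<or> x = y)}"
    using assms(3) by (auto simp: total_on_def)
qed (auto simp: refl_on_def)

section \<open>Trees\<close>

locale order_tree =
  fixes T :: "'a::order set"
  assumes is_tree: "is_tree T"
begin

lemma below_comparable:
  assumes "x \<in> T" "a \<in> T" "b \<in> T" "a \<le> x" "b \<le> x"
  shows "a \<le> b \<or> b \<le> a"
proof (cases "a = x \<or> b = x")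
  case False
  then have "a \<in> predecessors T x" "b \<in> predecessors T x"
    using assms by (auto simp: predecessors_def)
  then show ?thesis using is_tree assms(1) unfolding is_tree_def by blast
qed (use assms in auto)

lemma below_has_least:
  assumes "x \<in> T" "A \<subseteq> {z \<in> T. z \<le> x}" "A \<noteq> {}"
  obtains m where "m \<in> A" "\<And>z. z \<in> A \<Longrightarrow> m \<le> z"
proof (cases "A \<inter> predecessors T x = {}")
  case True
  then have all_x: "z = x" if "z \<in> A" for z
    using assms(2) that by (auto simp: predecessors_def order.order_iff_strict)
  obtain m where "m \<in> A" using assms(3) by blast
  then show ?thesis using that all_x by (metis order.refl)
next
  case False
  let ?R = "{(u, v). u \<in> predecessors T x \<and> v \<in> predecessors T x \<and> u < v}"
  have "wf ?R" using is_tree assms(1) unfolding is_tree_def by blast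
  moreover obtain u where "u \<in> A \<inter> predecessors T x" using False by blast
  ultimately obtain m where m: "m \<in> A \<inter> predecessors T x"
    and m_min: "\<And>z. (z, m) \<in> ?R \<Longrightarrow> z \<notin> A \<inter> predecessors T x"
    by (rule wfE_min) blast
  have "m \<le> z" if "z \<in> A" for z
  proof (cases "z \<in> predecessors T x")
    case True
    have "m \<le> z \<or> z \<le> m"
      using below_comparable[OF assms(1), of m z] True m by (auto simp: predecessors_def)
    moreover have "\<not> z < m" using m_min[of z] True m that by auto
    ultimately show ?thesis by (auto simp: order.order_iff_strict)
  next
    case False
    then have "z = x" using that assms(2) by (auto simp: predecessors_def)
    then show ?thesis using m by (auto simp: predecessors_def)
  qed
  then show ?thesis using m that by blast
qed

definition siblings :: "'a \<Rightarrow> 'a \<Rightarrow> bool" where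
  "siblings a b \<longleftrightarrow> a \<in> T \<and> b \<in> T \<and> predecessors T a = predecessors T b"

lemma siblings_sym: "siblings a b \<Longrightarrow> siblings b a"
  and siblings_trans: "siblings a b \<Longrightarrow> siblings b c \<Longrightarrow> siblings a c"
  by (auto simp: siblings_def)

lemma siblings_comparable_eq:
  assumes "siblings a b" "a \<le> b \<or> b \<le> a"
  shows "a = b"
  using assms by (auto simp: siblings_def predecessors_def order.order_iff_strict set_eq_iff)

lemma less_sibling_iff: "siblings b c \<Longrightarrow> u \<in> T \<Longrightarrow> u < b \<longleftrightarrow> u < c"
  by (auto simp: siblings_def predecessors_def set_eq_iff)

lemma immediate_successors_iff:
  assumes "p \<in> T"
  shows "a \<in> immediate_successors T p \<longleftrightarrow> a \<in> T \<and> predecessors T a = {z \<in> T. z \<le> p}"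
proof
  assume "a \<in> immediate_successors T p"
  then have a: "a \<in> T" "p < a" and nothing_between: "\<not> (\<exists>z\<in>T. p < z \<and> z < a)"
    by (auto simp: immediate_successors_def)
  have "predecessors T a = {z \<in> T. z \<le> p}"
  proof (intro set_eqI iffI)
    fix z assume "z \<in> predecessors T a"
    then have z: "z \<in> T" "z < a" by (auto simp: predecessors_def)
    then have "z \<le> p \<or> p \<le> z" using below_comparable[OF a(1) z(1) assms] a by auto
    then show "z \<in> {z \<in> T. z \<le> p}" using nothing_between z by (auto simp: order.order_iff_strict)
  next
    fix z assume "z \<in> {z \<in> T. z \<le> p}"
    then show "z \<in> predecessors T a" using a by (auto simp: predecessors_def)
  qed
  then show "a \<in> T \<and> predecessors T a = {z \<in> T. z \<le> p}" using a by blast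
next
  assume a: "a \<in> T \<and> predecessors T a = {z \<in> T. z \<le> p}"
  then have "p \<in> predecessors T a" using assms by simp
  then have "p < a" by (simp add: predecessors_def)
  moreover have "\<not> z < a" if "z \<in> T" "p < z" for z
  proof
    assume "z < a"
    then have "z \<in> predecessors T a" using that by (simp add: predecessors_def)
    then show False using a \<open>p < z\<close> by auto
  qed
  ultimately show "a \<in> immediate_successors T p"
    using a by (auto simp: immediate_successors_def)
qed

lemma siblings_immediate_successors:
  assumes "p \<in> T" "a \<in> immediate_successors T p"
  shows "siblings a b \<longleftrightarrow> b \<in> immediate_successors T p"
  using assms immediate_successors_iff by (auto simp: siblings_def)

lemma immediate_predecessor_unique:
  assumes "p \<in> T" "q \<in> T" "a \<in> immediate_successors T p" "a \<in> immediate_successors T q"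
  shows "p = q"
proof -
  have "{z \<in> T. z \<le> p} = {z \<in> T. z \<le> q}"
    using assms immediate_successors_iff by auto
  then show ?thesis using assms(1,2) by (auto intro: order.antisym)
qed

lemma immediate_successor_below:
  assumes "x \<in> T" "y \<in> T" "x < y"
  obtains c where "c \<in> immediate_successors T x" "c \<le> y"
proof -
  let ?A = "{z \<in> T. x < z \<and> z \<le> y}"
  obtain c where c: "c \<in> ?A" and c_least: "\<And>z. z \<in> ?A \<Longrightarrow> c \<le> z"
    using below_has_least[OF assms(2), of ?A] assms by blast
  have "c \<in> immediate_successors T x"
    using c c_least by (force simp: immediate_successors_def)
  then show ?thesis using c that by blast
qed

lemma openin_fine_wedge_topology_singleton:
  assumes "a \<in> T" "finite (immediate_successors T a)"
  shows "openin (fine_wedge_topology T) {a}"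
proof -
  have "{a} = wedge T a - \<Union> (wedge T ` immediate_successors T a)"
  proof
    show "{a} \<subseteq> wedge T a - \<Union> (wedge T ` immediate_successors T a)"
      using assms(1) by (auto simp: wedge_def immediate_successors_def)
    show "wedge T a - \<Union> (wedge T ` immediate_successors T a) \<subseteq> {a}"
    proof
      fix y assume y: "y \<in> wedge T a - \<Union> (wedge T ` immediate_successors T a)"
      show "y \<in> {a}"
      proof (rule ccontr)
        assume "y \<notin> {a}"
        then have "a < y" using y by (auto simp: wedge_def)
        then obtain c where "c \<in> immediate_successors T a" "c \<le> y"
          using immediate_successor_below assms(1) y by (auto simp: wedge_def)
        then show False using y by (auto simp: wedge_def)
      qed
    qed
  qed
  moreover have "immediate_successors T a \<subseteq> T"
    by (auto simp: immediate_successors_def)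
  ultimately show ?thesis using openin_wedge_diff_wedges assms by metis
qed

definition forks_at :: "'a \<Rightarrow> 'a \<Rightarrow> 'a \<Rightarrow> 'a \<Rightarrow> bool" where
  "forks_at x y a b \<longleftrightarrow> siblings a b \<and> a \<noteq> b \<and> a \<le> x \<and> b \<le> y"

lemma forks_at_sym: "forks_at x y a b \<Longrightarrow> forks_at y x b a"
  by (auto simp: forks_at_def siblings_def)

lemma forks_at_mono: "forks_at x y a b \<Longrightarrow> x \<le> x' \<Longrightarrow> y \<le> y' \<Longrightarrow> forks_at x' y' a b"
  by (auto simp: forks_at_def)

lemma forks_at_not_le:
  assumes "forks_at x y a b" "y \<in> T"
  shows "\<not> x \<le> y"
proof
  assume "x \<le> y"
  then have "a \<le> b \<or> b \<le> a"
    using assms below_comparable[OF assms(2), of a b] by (auto simp: forks_at_def siblings_def)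
  then show False using assms(1) siblings_comparable_eq by (auto simp: forks_at_def)
qed

lemma forks_at_unique:
  assumes "forks_at x y a b" "forks_at x y a' b'" "x \<in> T" "y \<in> T"
  shows "a = a' \<and> b = b'"
proof -
  have not_less: "\<not> a < a'" if "forks_at x y a b" "forks_at x y a' b'" "y \<in> T" for x y a b a' b'
  proof
    assume "a < a'"
    then have "a < b'" using that less_sibling_iff by (auto simp: forks_at_def siblings_def)
    then have "a \<le> b \<or> b \<le> a"
      using that below_comparable[OF \<open>y \<in> T\<close>, of a b] by (auto simp: forks_at_def siblings_def)
    then show False using that(1) siblings_comparable_eq by (auto simp: forks_at_def)
  qed
  have "a \<le> a' \<or> a' \<le> a" "b \<le> b' \<or> b' \<le> b"
    using assms below_comparable by (auto simp: forks_at_def siblings_def)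
  moreover have "\<not> a < a'" "\<not> a' < a" "\<not> b < b'" "\<not> b' < b"
    using not_less assms forks_at_sym by blast+
  ultimately show ?thesis by (auto simp: order.order_iff_strict)
qed

lemma forks_at_exists:
  assumes "x \<in> T" "y \<in> T" "\<not> x \<le> y" "\<not> y \<le> x"
  obtains a b where "forks_at x y a b"
proof -
  let ?A = "{z \<in> T. z \<le> x \<and> \<not> z \<le> y}" and ?B = "{z \<in> T. z \<le> y \<and> \<not> z \<le> x}"
  obtain a where a: "a \<in> ?A" and a_least: "\<And>z. z \<in> ?A \<Longrightarrow> a \<le> z"
    using below_has_least[OF assms(1), of ?A] assms by blast
  obtain b where b: "b \<in> ?B" and b_least: "\<And>z. z \<in> ?B \<Longrightarrow> b \<le> z"
    using below_has_least[OF assms(2), of ?B] assms by blast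
  have "z < b" if "z \<in> T" "z < a" for z
  proof -
    have "z \<le> x" "z \<le> y" using a a_least that by force+
    then have "b \<le> z \<or> z \<le> b" using below_comparable[OF assms(2), of b z] b that by auto
    moreover have "\<not> b \<le> z" "z \<noteq> b" using b \<open>z \<le> x\<close> order.trans by blast+
    ultimately show ?thesis by (auto simp: order.order_iff_strict)
  qed
  moreover have "z < a" if "z \<in> T" "z < b" for z
  proof -
    have "z \<le> y" "z \<le> x" using b b_least that by force+
    then have "a \<le> z \<or> z \<le> a" using below_comparable[OF assms(1), of a z] a that by auto
    moreover have "\<not> a \<le> z" "z \<noteq> a" using a \<open>z \<le> y\<close> order.trans by blast+
    ultimately show ?thesis by (auto simp: order.order_iff_strict)
  qed
  ultimately have "forks_at x y a b"
    using a b by (auto simp: forks_at_def siblings_def predecessors_def)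
  then show ?thesis using that by blast
qed

end

section \<open>The lexicographic order of a tree\<close>

locale sibling_ordered_tree = order_tree T for T :: "'a::order set" +
  fixes S :: "'a \<Rightarrow> 'a \<Rightarrow> bool"
  assumes sibling_less_irrefl: "\<not> S a a"
    and sibling_less_trans: "siblings a b \<Longrightarrow> siblings b c \<Longrightarrow> S a b \<Longrightarrow> S b c \<Longrightarrow> S a c"
    and sibling_less_total: "siblings a b \<Longrightarrow> a \<noteq> b \<Longrightarrow> S a b \<or> S b a"
    and finite_not_sibling_less:
      "p \<in> T \<Longrightarrow> c \<in> immediate_successors T p
        \<Longrightarrow> finite {d \<in> immediate_successors T p. \<not> S d c}"
begin

definition lex_less :: "'a \<Rightarrow> 'a \<Rightarrow> bool" where
  "lex_less x y \<longleftrightarrow> x < y \<or> (\<exists>a b. forks_at x y a b \<and> S a b)"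

lemma lex_less_irrefl: "x \<in> T \<Longrightarrow> \<not> lex_less x x"
  using forks_at_not_le by (auto simp: lex_less_def)

lemma lex_less_asym:
  assumes "x \<in> T" "y \<in> T" "lex_less x y"
  shows "\<not> lex_less y x"
proof
  assume yx: "lex_less y x"
  show False
  proof (cases "x < y")
    case True
    then obtain c d where "forks_at y x c d"
      using yx by (auto simp: lex_less_def)
    then have "\<not> x \<le> y" using forks_at_sym forks_at_not_le assms(2) by blast
    then show False using True by simp
  next
    case False
    then obtain a b where ab: "forks_at x y a b" "S a b"
      using assms(3) by (auto simp: lex_less_def)
    have "\<not> y \<le> x" using forks_at_not_le[OF forks_at_sym[OF ab(1)] assms(1)] .
    then obtain c d where cd: "forks_at y x c d" "S c d"
      using yx by (auto simp: lex_less_def)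
    have "d = a" "c = b"
      using forks_at_unique[OF ab(1) forks_at_sym[OF cd(1)] assms(1,2)] by auto
    then have "S a a"
      using ab cd sibling_less_trans forks_at_def siblings_sym by metis
    then show False using sibling_less_irrefl by blast
  qed
qed

lemma lex_less_upward: "lex_less a x \<Longrightarrow> x \<le> y \<Longrightarrow> lex_less a y"
  using forks_at_mono by (auto simp: lex_less_def)

lemma lex_less_trans_less_fork:
  assumes "x \<in> T" "y \<in> T" "x < y" "forks_at y z b c" "S b c"
  shows "lex_less x z"
proof -
  have b: "b \<in> T" "b \<le> y" and c: "siblings b c" "c \<le> z"
    using assms(4) by (auto simp: forks_at_def siblings_def)
  then have "b \<le> x \<or> x < b"
    using below_comparable[OF assms(2) b(1) assms(1) b(2)] assms(3)
    by (auto simp: order.order_iff_strict)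
  then show ?thesis
  proof
    assume "b \<le> x"
    then have "forks_at x z b c" using assms(4) by (auto simp: forks_at_def)
    then show ?thesis using assms(5) by (auto simp: lex_less_def)
  next
    assume "x < b"
    then have "x < c" using less_sibling_iff[OF c(1) assms(1)] by simp
    then have "x < z" using c(2) by (rule order.strict_trans2)
    then show ?thesis by (simp add: lex_less_def)
  qed
qed

lemma lex_less_trans_fork_fork:
  assumes "y \<in> T" "forks_at x y a b" "S a b" "forks_at y z b' c" "S b' c"
  shows "lex_less x z"
proof -
  have ab: "siblings a b" "a \<le> x" "b \<le> y" and b'c: "siblings b' c" "b' \<le> y" "c \<le> z"
    using assms(2,4) by (auto simp: forks_at_def)
  then have "b \<in> T" "b' \<in> T" by (auto simp: siblings_def)
  then have "b \<le> b' \<or> b' \<le> b"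
    using below_comparable[OF assms(1)] ab(3) b'c(2) by blast
  then consider "b = b'" | "b < b'" | "b' < b" by (auto simp: order.order_iff_strict)
  then show ?thesis
  proof cases
    case 1
    then have "S a c" "siblings a c"
      using ab(1) b'c(1) assms(3,5) sibling_less_trans siblings_trans by blast+
    moreover have "a \<noteq> c" using \<open>S a c\<close> sibling_less_irrefl by blast
    ultimately have "forks_at x z a c" using ab(2) b'c(3) by (simp add: forks_at_def)
    then show ?thesis using \<open>S a c\<close> by (auto simp: lex_less_def)
  next
    case 2
    then have "b < c" using less_sibling_iff[OF b'c(1) \<open>b \<in> T\<close>] by simp
    then have "b \<le> z" using b'c(3) by simp
    then have "forks_at x z a b" using assms(2) by (auto simp: forks_at_def)
    then show ?thesis using assms(3) by (auto simp: lex_less_def)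
  next
    case 3
    then have "b' < a" using less_sibling_iff[OF siblings_sym[OF ab(1)] \<open>b' \<in> T\<close>] by simp
    then have "b' \<le> x" using ab(2) by simp
    then have "forks_at x z b' c" using assms(4) by (auto simp: forks_at_def)
    then show ?thesis using assms(5) by (auto simp: lex_less_def)
  qed
qed

lemma lex_less_trans:
  assumes "x \<in> T" "y \<in> T" "lex_less x y" "lex_less y z"
  shows "lex_less x z"
proof (cases "x < y")
  case True
  show ?thesis
  proof (cases "y < z")
    case True
    then show ?thesis using \<open>x < y\<close> order.strict_trans unfolding lex_less_def by blast
  next
    case False
    then obtain b c where "forks_at y z b c" "S b c" using assms(4) by (auto simp: lex_less_def)
    then show ?thesis using lex_less_trans_less_fork assms(1,2) True by blast
  qed
next
  case False
  then obtain a b where ab: "forks_at x y a b" "S a b" using assms(3) by (auto simp: lex_less_def)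
  show ?thesis
  proof (cases "y < z")
    case True
    then have "forks_at x z a b" using forks_at_mono[OF ab(1) order.refl] by simp
    then show ?thesis using ab(2) by (auto simp: lex_less_def)
  next
    case False
    then obtain b' c where "forks_at y z b' c" "S b' c" using assms(4) by (auto simp: lex_less_def)
    then show ?thesis using lex_less_trans_fork_fork assms(2) ab by blast
  qed
qed

lemma lex_less_total:
  assumes "x \<in> T" "y \<in> T" "x \<noteq> y"
  shows "lex_less x y \<or> lex_less y x"
proof (cases "x \<le> y \<or> y \<le> x")
  case True
  then show ?thesis using assms(3) by (auto simp: lex_less_def order.order_iff_strict)
next
  case False
  then obtain a b where "forks_at x y a b" using forks_at_exists assms by blast
  moreover from this consider "S a b" | "S b a"
    using sibling_less_total by (auto simp: forks_at_def)
  ultimately show ?thesis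
    using forks_at_sym unfolding lex_less_def by blast
qed

lemma wedge_lex_convex:
  assumes "t \<le> w" "lex_less t x \<or> t = x" "lex_less x w \<or> x = w" "x \<in> T" "w \<in> T"
  shows "t \<le> x"
proof (rule ccontr)
  assume "\<not> t \<le> x"
  then obtain a b where "forks_at t x a b" "S a b"
    using assms(2) by (auto simp: lex_less_def)
  then have "forks_at w x a b" using forks_at_mono[OF _ assms(1) order.refl] by blast
  then have "lex_less w x" using \<open>S a b\<close> by (auto simp: lex_less_def)
  then show False using assms(3-5) lex_less_asym lex_less_irrefl by blast
qed

lemma openin_lex_greater: "openin (fine_wedge_topology T) {x \<in> T. lex_less a x}"
  by (rule openin_fine_wedge_topology_upclosed) (auto intro: lex_less_upward)

lemma openin_lex_greater_eq: "openin (fine_wedge_topology T) {x \<in> T. lex_less a x \<or> a = x}"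
proof (rule openin_fine_wedge_topology_upclosed)
  fix x y assume "x \<in> {x \<in> T. lex_less a x \<or> a = x}" "y \<in> T" "x \<le> y"
  then have "lex_less a y \<or> a = y"
    using lex_less_upward[of a x y] by (auto simp: lex_less_def order.order_iff_strict)
  then show "y \<in> {x \<in> T. lex_less a x \<or> a = x}" using \<open>y \<in> T\<close> by blast
qed auto

lemma lex_less_of_wedge_diff:
  assumes "x \<in> T" "c \<in> immediate_successors T x" "c \<le> a"
    and "y \<in> wedge T x - \<Union> (wedge T ` {d \<in> immediate_successors T x. \<not> S d c})"
  shows "lex_less y a"
proof (cases "x = y")
  case True
  then have "y < a"
    using assms(2,3) by (auto simp: immediate_successors_def intro: order.strict_trans2)
  then show ?thesis by (simp add: lex_less_def)
next
  case False
  then have "x < y" using assms(4) by (auto simp: wedge_def)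
  then obtain d where d: "d \<in> immediate_successors T x" "d \<le> y"
    using immediate_successor_below assms(1,4) by (auto simp: wedge_def)
  then have "S d c" using assms(4) by (auto simp: wedge_def)
  moreover have "siblings d c"
    using siblings_immediate_successors assms(1,2) d(1) by blast
  ultimately have "forks_at y a d c"
    using assms(3) d(2) sibling_less_irrefl by (auto simp: forks_at_def)
  then show ?thesis using \<open>S d c\<close> by (auto simp: lex_less_def)
qed

lemma openin_lex_less:
  assumes "a \<in> T"
  shows "openin (fine_wedge_topology T) {x \<in> T. lex_less x a}"
proof (subst openin_subopen, intro ballI)
  fix x assume "x \<in> {x \<in> T. lex_less x a}"
  then have x: "x \<in> T" "lex_less x a" by auto
  show "\<exists>N. openin (fine_wedge_topology T) N \<and> x \<in> N \<and> N \<subseteq> {x \<in> T. lex_less x a}"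
  proof (cases "x < a")
    case False
    then obtain b c where bc: "forks_at x a b c" "S b c" using x by (auto simp: lex_less_def)
    then have "wedge T x \<subseteq> {x \<in> T. lex_less x a}"
      using forks_at_mono by (auto simp: wedge_def lex_less_def)
    then show ?thesis using openin_wedge[OF x(1)] x(1) by (auto simp: wedge_def)
  next
    case True
    then obtain c where c: "c \<in> immediate_successors T x" "c \<le> a"
      using immediate_successor_below x(1) assms by blast
    define F where "F = {d \<in> immediate_successors T x. \<not> S d c}"
    have F: "finite F" "F \<subseteq> T"
      using finite_not_sibling_less x(1) c(1) by (auto simp: F_def immediate_successors_def)
    have "wedge T x - \<Union> (wedge T ` F) \<subseteq> {x \<in> T. lex_less x a}"
      using lex_less_of_wedge_diff[OF x(1) c] by (auto simp: F_def wedge_def)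
    moreover have "x \<in> wedge T x - \<Union> (wedge T ` F)"
      using x(1) by (auto simp: wedge_def F_def immediate_successors_def)
    ultimately show ?thesis using openin_wedge_diff_wedges[OF x(1) F] by blast
  qed
qed

lemma openin_lex_less_eq:
  assumes "a \<in> T" "finite (immediate_successors T a)"
  shows "openin (fine_wedge_topology T) {x \<in> T. lex_less x a \<or> x = a}"
proof -
  have "{x \<in> T. lex_less x a \<or> x = a} = {x \<in> T. lex_less x a} \<union> {a}"
    using assms by auto
  then show ?thesis
    using openin_lex_less openin_fine_wedge_topology_singleton assms by (metis openin_Un)
qed

section \<open>Embedding into a linearly ordered space\<close>

definition lots :: "('a \<times> int) set" where
  "lots = {(x, i). x \<in> T \<and> (i = -1 \<or> i = 0 \<or> i = 1 \<and> finite (immediate_successors T x))}"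

definition lots_less :: "'a \<times> int \<Rightarrow> 'a \<times> int \<Rightarrow> bool" where
  "lots_less u v \<longleftrightarrow> lex_less (fst u) (fst v) \<or> fst u = fst v \<and> snd u < snd v"

definition lots_le :: "('a \<times> int) rel" where
  "lots_le = {(u, v). u \<in> lots \<and> v \<in> lots \<and> (lots_less u v \<or> u = v)}"

lemma lots_fst: "u \<in> lots \<Longrightarrow> fst u \<in> T"
  by (auto simp: lots_def)

lemma linear_order_on_lots: "linear_order_on lots lots_le"
  unfolding lots_le_def
proof (rule linear_order_on_reflcl_strict)
  fix u assume "u \<in> lots"
  then show "\<not> lots_less u u" using lex_less_irrefl[OF lots_fst] by (simp add: lots_less_def)
next
  fix u v w assume "u \<in> lots" "v \<in> lots" "w \<in> lots" "lots_less u v" "lots_less v w"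
  then show "lots_less u w"
    using lex_less_trans[OF lots_fst lots_fst, of u v] unfolding lots_less_def by auto
next
  fix u v assume uv: "u \<in> lots" "v \<in> lots" "u \<noteq> v"
  show "lots_less u v \<or> lots_less v u"
  proof (cases "fst u = fst v")
    case True
    then have "snd u \<noteq> snd v" using uv(3) by (simp add: prod_eq_iff)
    then show ?thesis using True unfolding lots_less_def by auto
  next
    case False
    then show ?thesis using lex_less_total[OF lots_fst lots_fst] uv unfolding lots_less_def by blast
  qed
qed

lemma lots_le_strict_iff:
  assumes "u \<in> lots" "v \<in> lots"
  shows "(u, v) \<in> lots_le \<and> v \<noteq> u \<longleftrightarrow> lots_less u v"
  using assms lex_less_irrefl[OF lots_fst[OF assms(1)]] by (auto simp: lots_le_def lots_less_def)

lemma embedding_in_lots: "x \<in> T \<Longrightarrow> (x, 0) \<in> lots"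
  by (simp add: lots_def)

lemma continuous_map_lots_embedding:
  "continuous_map (fine_wedge_topology T) (order_topology_on lots lots_le) (\<lambda>x. (x, 0))"
proof (rule continuous_map_into_order_topology_on)
  show "(\<lambda>x. (x, 0)) ` topspace (fine_wedge_topology T) \<subseteq> lots"
    using embedding_in_lots by auto
next
  fix a assume a: "a \<in> lots"
  then obtain p i where a_eq: "a = (p, i)" "p \<in> T" by (auto simp: lots_def)
  have "{x \<in> topspace (fine_wedge_topology T). (a, (x, 0)) \<in> lots_le \<and> (x, 0) \<noteq> a}
      = {x \<in> T. lots_less (p, i) (x, 0)}"
    using lots_le_strict_iff[OF a embedding_in_lots] a_eq by auto
  also have "\<dots> = (if i < 0 then {x \<in> T. lex_less p x \<or> p = x} else {x \<in> T. lex_less p x})"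
    by (auto simp: lots_less_def)
  finally show "openin (fine_wedge_topology T)
      {x \<in> topspace (fine_wedge_topology T). (a, (x, 0)) \<in> lots_le \<and> (x, 0) \<noteq> a}"
    using openin_lex_greater openin_lex_greater_eq by simp
next
  fix a assume a: "a \<in> lots"
  then obtain p i where a_eq: "a = (p, i)" "p \<in> T" by (auto simp: lots_def)
  have "{x \<in> topspace (fine_wedge_topology T). ((x, 0), a) \<in> lots_le \<and> (x, 0) \<noteq> a}
      = {x \<in> T. lots_less (x, 0) (p, i)}"
    using lots_le_strict_iff[OF embedding_in_lots a] a_eq by auto
  also have "\<dots> = (if 0 < i then {x \<in> T. lex_less x p \<or> x = p} else {x \<in> T. lex_less x p})"
    by (auto simp: lots_less_def)
  finally show "openin (fine_wedge_topology T)
      {x \<in> topspace (fine_wedge_topology T). ((x, 0), a) \<in> lots_le \<and> (x, 0) \<noteq> a}"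
    using openin_lex_less[OF a_eq(2)] openin_lex_less_eq[OF a_eq(2)] a a_eq
    by (auto simp: lots_def)
qed

lemma openin_lots_greater:
  assumes "a \<in> lots"
  shows "openin (order_topology_on lots lots_le) {u \<in> lots. lots_less a u}"
proof -
  have "{u \<in> lots. lots_less a u} = {u \<in> lots. (a, u) \<in> lots_le \<and> u \<noteq> a}"
    using lots_le_strict_iff[OF assms] by blast
  then show ?thesis using openin_order_topology_on_greater[OF assms] by simp
qed

lemma openin_lots_less:
  assumes "a \<in> lots"
  shows "openin (order_topology_on lots lots_le) {u \<in> lots. lots_less u a}"
proof -
  have "{u \<in> lots. lots_less u a} = {u \<in> lots. (u, a) \<in> lots_le \<and> u \<noteq> a}"
    using lots_le_strict_iff[OF _ assms] by blast
  then show ?thesis using openin_order_topology_on_less[OF assms] by simp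
qed

lemma wedge_iff_lots:
  assumes "x \<in> T" "t \<in> T"
  shows "x \<in> wedge T t \<longleftrightarrow>
    lots_less (t, -1) (x, 0) \<and> (\<exists>w \<in> lots. fst w \<in> wedge T t \<and> lots_less (x, 0) w)"
proof
  assume x: "x \<in> wedge T t"
  then have "lots_less (t, -1) (x, 0)"
    by (auto simp: lots_less_def lex_less_def wedge_def order.order_iff_strict)
  moreover have "\<exists>w \<in> lots. fst w \<in> wedge T t \<and> lots_less (x, 0) w"
  proof (cases "immediate_successors T x = {}")
    case True
    then have "(x, 1) \<in> lots" using assms by (auto simp: lots_def)
    then show ?thesis using x by (intro bexI[of _ "(x, 1)"]) (auto simp: lots_less_def)
  next
    case False
    then obtain c where "c \<in> immediate_successors T x" by blast
    then have "(c, 0) \<in> lots" "c \<in> wedge T t" "lots_less (x, 0) (c, 0)"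
      using x by (auto simp: lots_def wedge_def immediate_successors_def lots_less_def lex_less_def)
    then show ?thesis by (intro bexI[of _ "(c, 0)"]) auto
  qed
  ultimately show "lots_less (t, -1) (x, 0) \<and> (\<exists>w \<in> lots. fst w \<in> wedge T t \<and> lots_less (x, 0) w)"
    by blast
next
  assume "lots_less (t, -1) (x, 0) \<and> (\<exists>w \<in> lots. fst w \<in> wedge T t \<and> lots_less (x, 0) w)"
  then obtain w where "lex_less t x \<or> t = x" "w \<in> lots" "fst w \<in> wedge T t"
    "lex_less x (fst w) \<or> x = fst w"
    by (auto simp: lots_less_def)
  then show "x \<in> wedge T t"
    using wedge_lex_convex assms by (auto simp: wedge_def)
qed

lemma not_wedge_iff_lots:
  assumes "x \<in> T" "t \<in> T"
  shows "x \<notin> wedge T t \<longleftrightarrow>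
    lots_less (x, 0) (t, -1) \<or> (\<exists>w \<in> T. w \<notin> wedge T t \<and> lex_less t w \<and> lots_less (w, -1) (x, 0))"
proof
  assume "x \<notin> wedge T t"
  then have "x \<noteq> t" using assms by (auto simp: wedge_def)
  then show "lots_less (x, 0) (t, -1) \<or>
      (\<exists>w \<in> T. w \<notin> wedge T t \<and> lex_less t w \<and> lots_less (w, -1) (x, 0))"
    using lex_less_total assms \<open>x \<notin> wedge T t\<close> by (auto simp: lots_less_def)
next
  assume *: "lots_less (x, 0) (t, -1) \<or>
      (\<exists>w \<in> T. w \<notin> wedge T t \<and> lex_less t w \<and> lots_less (w, -1) (x, 0))"
  show "x \<notin> wedge T t"
  proof
    assume "x \<in> wedge T t"
    then have "t \<le> x" "lex_less t x \<or> t = x"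
      by (auto simp: wedge_def lex_less_def order.order_iff_strict)
    with * assms show False
      using lex_less_asym lex_less_irrefl wedge_lex_convex
      by (auto simp: lots_less_def wedge_def)
  qed
qed

lemma wedge_trace_lots:
  assumes "t \<in> T"
  obtains V where "openin (order_topology_on lots lots_le) V"
    "\<And>x. x \<in> T \<Longrightarrow> (x, 0) \<in> V \<longleftrightarrow> x \<in> wedge T t"
proof
  have "(t, -1) \<in> lots" using assms by (simp add: lots_def)
  then show "openin (order_topology_on lots lots_le) ({u \<in> lots. lots_less (t, -1) u}
      \<inter> (\<Union>w \<in> {w \<in> lots. fst w \<in> wedge T t}. {u \<in> lots. lots_less u w}))"
    by (intro openin_Int openin_Union openin_lots_greater) (auto intro: openin_lots_less)
  fix x assume "x \<in> T"
  then show "(x, 0) \<in> {u \<in> lots. lots_less (t, -1) u}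
      \<inter> (\<Union>w \<in> {w \<in> lots. fst w \<in> wedge T t}. {u \<in> lots. lots_less u w})
      \<longleftrightarrow> x \<in> wedge T t"
    using wedge_iff_lots[OF _ assms] embedding_in_lots by blast
qed

lemma co_wedge_trace_lots:
  assumes "t \<in> T"
  obtains V where "openin (order_topology_on lots lots_le) V"
    "\<And>x. x \<in> T \<Longrightarrow> (x, 0) \<in> V \<longleftrightarrow> x \<notin> wedge T t"
proof
  have "(w, -1) \<in> lots" if "w \<in> T" for w using that by (simp add: lots_def)
  then show "openin (order_topology_on lots lots_le) ({u \<in> lots. lots_less u (t, -1)}
      \<union> (\<Union>w \<in> {w \<in> T. w \<notin> wedge T t \<and> lex_less t w}. {u \<in> lots. lots_less (w, -1) u}))"
    using assms by (intro openin_Un openin_Union openin_lots_less) (auto intro: openin_lots_greater)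
  fix x assume "x \<in> T"
  then show "(x, 0) \<in> {u \<in> lots. lots_less u (t, -1)}
      \<union> (\<Union>w \<in> {w \<in> T. w \<notin> wedge T t \<and> lex_less t w}. {u \<in> lots. lots_less (w, -1) u})
      \<longleftrightarrow> x \<notin> wedge T t"
    using not_wedge_iff_lots[OF _ assms] embedding_in_lots by blast
qed

lemma continuous_map_fst_lots:
  "continuous_map (subtopology (order_topology_on lots lots_le) ((\<lambda>x. (x, 0)) ` T))
    (fine_wedge_topology T) fst"
proof (rule continuous_map_into_fine_wedge_topology)
  let ?Y = "(\<lambda>x. (x, 0)) ` T"
  have "?Y \<subseteq> lots" using embedding_in_lots by auto
  then have topspace_Y: "topspace (subtopology (order_topology_on lots lots_le) ?Y) = ?Y"
    by auto
  then show "fst ` topspace (subtopology (order_topology_on lots lots_le) ?Y) \<subseteq> T"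
    by auto
  fix t assume t: "t \<in> T"
  obtain V where "openin (order_topology_on lots lots_le) V"
    and V: "\<And>x. x \<in> T \<Longrightarrow> (x, 0) \<in> V \<longleftrightarrow> x \<in> wedge T t"
    using wedge_trace_lots[OF t] by blast
  moreover have "{u \<in> topspace (subtopology (order_topology_on lots lots_le) ?Y). fst u \<in> wedge T t}
      = ?Y \<inter> V"
    unfolding topspace_Y using V by auto
  ultimately show "openin (subtopology (order_topology_on lots lots_le) ?Y)
      {u \<in> topspace (subtopology (order_topology_on lots lots_le) ?Y). fst u \<in> wedge T t}"
    by (simp add: openin_subtopology_Int2)
  obtain V' where "openin (order_topology_on lots lots_le) V'"
    and V': "\<And>x. x \<in> T \<Longrightarrow> (x, 0) \<in> V' \<longleftrightarrow> x \<notin> wedge T t"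
    using co_wedge_trace_lots[OF t] by blast
  moreover have "{u \<in> topspace (subtopology (order_topology_on lots lots_le) ?Y). fst u \<notin> wedge T t}
      = ?Y \<inter> V'"
    unfolding topspace_Y using V' by auto
  ultimately show "openin (subtopology (order_topology_on lots lots_le) ?Y)
      {u \<in> topspace (subtopology (order_topology_on lots lots_le) ?Y). fst u \<notin> wedge T t}"
    by (simp add: openin_subtopology_Int2)
qed

theorem suborderable: "suborderable_in TYPE('a \<times> int) (fine_wedge_topology T)"
proof -
  let ?Y = "(\<lambda>x. (x, 0::int)) ` T"
  have Y: "?Y \<subseteq> lots" using embedding_in_lots by auto
  have "homeomorphic_maps (fine_wedge_topology T) (subtopology (order_topology_on lots lots_le) ?Y)
      (\<lambda>x. (x, 0)) fst"
    unfolding homeomorphic_maps_def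
    using continuous_map_into_subtopology[OF continuous_map_lots_embedding] continuous_map_fst_lots Y
    by auto
  then have "fine_wedge_topology T homeomorphic_space subtopology (order_topology_on lots lots_le) ?Y"
    unfolding homeomorphic_space_def by blast
  then show ?thesis
    unfolding suborderable_in_def using linear_order_on_lots Y by blast
qed

end

lemma (in order_tree) sibling_ordered_tree_rank:
  fixes r :: "'a \<Rightarrow> nat"
  assumes "linear_order_on UNIV W"
    and "\<And>p. p \<in> T \<Longrightarrow> inj_on r (immediate_successors T p)"
  shows "sibling_ordered_tree T (\<lambda>a b. r b < r a \<or> r a = r b \<and> (a, b) \<in> W \<and> a \<noteq> b)"
proof unfold_locales
  have W: "trans W" "antisym W"
    using assms(1) unfolding linear_order_on_def partial_order_on_def preorder_on_def by blast+
  fix a b c :: 'a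
  assume "siblings a b" "siblings b c"
    and "r b < r a \<or> r a = r b \<and> (a, b) \<in> W \<and> a \<noteq> b"
    and "r c < r b \<or> r b = r c \<and> (b, c) \<in> W \<and> b \<noteq> c"
  then show "r c < r a \<or> r a = r c \<and> (a, c) \<in> W \<and> a \<noteq> c"
    using W by (auto dest: transD antisymD)
next
  fix a b :: 'a
  assume "siblings a b" "a \<noteq> b"
  moreover have "total_on UNIV W"
    using assms(1) unfolding linear_order_on_def by blast
  ultimately show "(r b < r a \<or> r a = r b \<and> (a, b) \<in> W \<and> a \<noteq> b) \<or>
      (r a < r b \<or> r b = r a \<and> (b, a) \<in> W \<and> b \<noteq> a)"
    by (auto simp: total_on_def)
next
  fix p c assume p: "p \<in> T" and "c \<in> immediate_successors T p"
  have "{d \<in> immediate_successors T p. \<not> (r c < r d \<or> r d = r c \<and> (d, c) \<in> W \<and> d \<noteq> c)}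
      \<subseteq> r -` {..r c} \<inter> immediate_successors T p"
    by auto
  moreover have "finite (r -` {..r c} \<inter> immediate_successors T p)"
    using finite_vimage_IntI[OF _ assms(2)[OF p]] by simp
  ultimately show "finite
      {d \<in> immediate_successors T p. \<not> (r c < r d \<or> r d = r c \<and> (d, c) \<in> W \<and> d \<noteq> c)}"
    by (rule finite_subset)
qed simp

lemma (in order_tree) sibling_order_exists:
  assumes "\<forall>t\<in>T. countable (immediate_successors T t)"
  obtains S where "sibling_ordered_tree T S"
proof -
  obtain W :: "'a rel" where "Well_order W" "Field W = UNIV"
    using well_ordering[where 'a='a] by (elim exE conjE)
  then have W: "linear_order_on UNIV W"
    unfolding well_order_on_def by simp
  text \<open>For a node that is not an immediate successor, parent is unspecified; this is harmless,
    as its siblings may be ordered arbitrarily.\<close>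
  define parent where "parent a = (THE p. p \<in> T \<and> a \<in> immediate_successors T p)" for a
  have "inj_on (\<lambda>a. to_nat_on (immediate_successors T (parent a)) a) (immediate_successors T p)"
    if "p \<in> T" for p
  proof -
    have "parent a = p" if "a \<in> immediate_successors T p" for a
      unfolding parent_def using \<open>p \<in> T\<close> that immediate_predecessor_unique by blast
    then show ?thesis
      using inj_on_to_nat_on assms that by (metis (no_types, lifting) inj_on_cong)
  qed
  then show ?thesis using sibling_ordered_tree_rank[OF W] that by blast
qed

theorem theorem3p12:
  fixes T :: "'a::order set"
  assumes "is_tree T"
    and "\<forall>t\<in>T. countable (immediate_successors T t)"
  shows "suborderable_in TYPE('a \<times> int) (fine_wedge_topology T)"
proof -
  interpret order_tree T by (rule order_tree.intro) (fact assms(1))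
  obtain S where "sibling_ordered_tree T S"
    using sibling_order_exists assms(2) by blast
  then show ?thesis by (rule sibling_ordered_tree.suborderable)
qed

end
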